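(* Assume $f$ is sufficiently smooth (e.g. $f$ has continuous, bounded partial derivatives up to order four on $[a,b]\times\mathbb{R}$, so that the exact solution $y$ is sufficiently smooth and $f$ is Lipschitz in $y$). Let $w_i$ be produced by the RK3GL2 method with parameter $h=(b-a)/(3N)$ and $w_0=y(a)$. Then the global error at the Gauss–Legendre block endpoints satisfies $$\Delta_{3N}=w_{3N}-y(b)=O(h^4)\qquad (h\to 0),$$ i.e. RK3GL2 has global order four, one higher than the global order three of the underlying RK3 method.
   Context: Scalar initial value problem $y'=f(x,y)$, $y(a)=y_0$, $a\le x\le b$. RK3 denotes the explicit third-order Runge–Kutta method $w\mapsto w+\eta F(x,w)$ with step $\eta$, where $\eta F(x,w)=\frac29k_1+\frac39k_2+\frac49k_3$, $k_1=\eta f(x,w)$, $k_2=\eta f(x+\eta/2,\,w+k_1/2)$, $k_3=\eta f(x+3\eta/4,\,w+3k_2/4)$. RK3GL2 method with parameter $h>0$: the interval $[a,b]$ is divided into $N$ equal subintervals $[x_{3k},x_{3k+3}]$ of length $3h$ (so $x_{3k}=a+3kh$ and $3Nh=b-a$). Inside $[x_{3k},x_{3k+3}]$ the two Gauss–Legendre nodes are $x_{3k+1}=x_{3k}+\frac{3h}{2}(1-\frac{1}{\sqrt3})$ and $x_{3k+2}=x_{3k}+\frac{3h}{2}(1+\frac{1}{\sqrt3})$. Set $h_i=x_{i+1}-x_i$. The iteration is: $w_{3k+1}=w_{3k}+h_{3k}F(x_{3k},w_{3k})$, $w_{3k+2}=w_{3k+1}+h_{3k+1}F(x_{3k+1},w_{3k+1})$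 (RK3 steps, with step $h_i$), and $w_{3k+3}=w_{3k}+\frac{3h}{2}\big[f(x_{3k+1},w_{3k+1})+f(x_{3k+2},w_{3k+2})\big]$ (two-point Gauss–Legendre step). The global error is $\Delta_i=w_i-y(x_i)$. *)

theory Defs
  imports "HOL-Analysis.Analysis"
begin

definition rk3_incr :: "(real \<Rightarrow> real \<Rightarrow> real) \<Rightarrow> real \<Rightarrow> real \<Rightarrow> real \<Rightarrow> real" where
  "rk3_incr f x w eta =
     (let k1 = eta * f x w;
          k2 = eta * f (x + eta / 2) (w + k1 / 2);
          k3 = eta * f (x + 3 * eta / 4) (w + 3 * k2 / 4)
      in 2/9 * k1 + 3/9 * k2 + 4/9 * k3)"

definition rk3gl2_block :: "(real \<Rightarrow> real \<Rightarrow> real) \<Rightarrow> real \<Rightarrow> real \<Rightarrow> real \<Rightarrow> real" where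
  "rk3gl2_block f h x w =
     (let x1 = x + 3 * h / 2 * (1 - 1 / sqrt 3);
          x2 = x + 3 * h / 2 * (1 + 1 / sqrt 3);
          w1 = w + rk3_incr f x w (x1 - x);
          w2 = w1 + rk3_incr f x1 w1 (x2 - x1)
      in w + 3 * h / 2 * (f x1 w1 + f x2 w2))"

text \<open>rk3gl2 f a h w0 k = w_{3k}, the value at the block endpoint x_{3k} = a + 3kh.\<close>
fun rk3gl2 :: "(real \<Rightarrow> real \<Rightarrow> real) \<Rightarrow> real \<Rightarrow> real \<Rightarrow> real \<Rightarrow> nat \<Rightarrow> real" where
  "rk3gl2 f a h w0 0 = w0"
| "rk3gl2 f a h w0 (Suc k) = rk3gl2_block f h (a + 3 * real k * h) (rk3gl2 f a h w0 k)"

end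

theory Submission
  imports Defs
begin

text \<open>
  A block of RK3GL2 is the two-point Gauss--Legendre rule, which integrates cubics exactly and
  so has local error \<open>O(h\<^sup>5)\<close>; its stage values come from RK3, whose local error is only
  \<open>O(h\<^sup>4)\<close>. But the stage values enter the block only through \<open>3h/2 * f(x\<^sub>i, w\<^sub>i)\<close>, and
  \<open>f\<close> is Lipschitz, so they contribute \<open>O(h \<cdot> h\<^sup>4)\<close> as well. Hence a block maps an error
  \<open>\<Delta>\<close> at its left end to at most \<open>(1 + K h) \<Delta> + C h\<^sup>5\<close>, and summing over the
  \<open>N = (b - a) / (3 h)\<close> blocks (discrete Gronwall) gives global error \<open>O(h\<^sup>4)\<close>.
\<close>

lemma abs_mult_le: "\<bar>x\<bar> \<le> X \<Longrightarrow> \<bar>y\<bar> \<le> Y \<Longrightarrow> \<bar>x * y\<bar> \<le> X * (Y :: real)"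
  by (simp add: abs_mult mult_mono')

lemma abs_diff_le: "\<bar>x\<bar> \<le> X \<Longrightarrow> \<bar>y\<bar> \<le> Y \<Longrightarrow> \<bar>x - y\<bar> \<le> X + (Y :: real)"
  by simp

lemma abs_add_le: "\<bar>x\<bar> \<le> X \<Longrightarrow> \<bar>y\<bar> \<le> Y \<Longrightarrow> \<bar>x + y\<bar> \<le> X + (Y :: real)"
  by simp

lemma DERIV_nonpos_imp_decreasing_within:
  fixes \<psi> \<psi>' :: "real \<Rightarrow> real"
  assumes "x \<le> z"
    and "\<And>t. t \<in> {x..z} \<Longrightarrow> (\<psi> has_real_derivative \<psi>' t) (at t within {x..z})"
    and "\<And>t. t \<in> {x..z} \<Longrightarrow> \<psi>' t \<le> 0"
  shows "\<psi> z \<le> \<psi> x"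
proof (rule DERIV_nonpos_imp_decreasing_open[OF assms(1)])
  show "continuous_on {x..z} \<psi>"
    using assms(2) by (meson DERIV_continuous continuous_on_eq_continuous_within)
  show "\<exists>y. (\<psi> has_real_derivative y) (at t) \<and> y \<le> 0" if "x < t" "t < z" for t
    using assms(2)[of t] assms(3)[of t] that at_within_Icc_at[of x t z] by auto
qed

lemma DERIV_power_diff:
  "((\<lambda>t. (t - x) ^ Suc n) has_real_derivative real (Suc n) * (t - x) ^ n) (at t within S)"
proof -
  have "((\<lambda>t. (t - x) ^ Suc n) has_real_derivative
      real (Suc n) * ((1 - 0) * (t - x) ^ (Suc n - Suc 0))) (at t within S)"
    by (intro DERIV_power DERIV_diff DERIV_ident DERIV_const)
  then show ?thesis by simp
qed

lemma abs_le_of_derivative_bound_power: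
  fixes \<phi> \<phi>' :: "real \<Rightarrow> real"
  assumes s: "0 \<le> s"
    and \<phi>': "\<And>t. t \<in> {x..x+s} \<Longrightarrow> (\<phi> has_real_derivative \<phi>' t) (at t within {x..x+s})"
    and bound: "\<And>t. t \<in> {x..x+s} \<Longrightarrow> \<bar>\<phi>' t\<bar> \<le> M * (t - x) ^ n / fact n"
    and "\<phi> x = 0"
  shows "\<bar>\<phi> (x + s)\<bar> \<le> M * s ^ Suc n / fact (Suc n)"
proof -
  define B where "B t = M * (t - x) ^ Suc n / fact (Suc n)" for t
  have B': "(B has_real_derivative M * (t - x) ^ n / fact n) (at t within {x..x+s})" for t
  proof -
    have "(B has_real_derivative M * (real (Suc n) * (t - x) ^ n) / fact (Suc n)) (at t within {x..x+s})"
      unfolding B_def by (intro DERIV_cdivide DERIV_cmult DERIV_power_diff)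
    then show ?thesis
      by (simp add: field_simps del: of_nat_Suc)
  qed
  have "(\<lambda>t. \<phi> t - B t) (x + s) \<le> (\<lambda>t. \<phi> t - B t) x"
    by (rule DERIV_nonpos_imp_decreasing_within[OF _ DERIV_diff[OF \<phi>' B']])
      (use s bound in \<open>auto simp: abs_le_iff\<close>)
  moreover have "(\<lambda>t. - \<phi> t - B t) (x + s) \<le> (\<lambda>t. - \<phi> t - B t) x"
    by (rule DERIV_nonpos_imp_decreasing_within[OF _ DERIV_diff[OF DERIV_minus[OF \<phi>'] B']])
      (use s bound in \<open>auto simp: abs_le_iff\<close>)
  ultimately show ?thesis
    using \<open>\<phi> x = 0\<close> by (simp add: B_def)
qed

lemma taylor_remainder_bound_within:
  fixes g :: "nat \<Rightarrow> real \<Rightarrow> real"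
  assumes "0 \<le> s"
    and "\<And>m t. m < n \<Longrightarrow> t \<in> {x..x+s} \<Longrightarrow>
           (g m has_real_derivative g (Suc m) t) (at t within {x..x+s})"
    and "\<And>t. t \<in> {x..x+s} \<Longrightarrow> \<bar>g n t\<bar> \<le> M"
  shows "\<bar>g 0 (x + s) - (\<Sum>m<n. g m x * s ^ m / fact m)\<bar> \<le> M * s ^ n / fact n"
  using assms
proof (induction n arbitrary: g s)
  case 0
  then show ?case by simp
next
  case (Suc n)
  define \<phi> where "\<phi> t = g 0 t - (\<Sum>m<Suc n. g m x * (t - x) ^ m / fact m)" for t
  define \<phi>' where "\<phi>' t = g (Suc 0) t - (\<Sum>m<n. g (Suc m) x * (t - x) ^ m / fact m)" for t
  have "\<bar>\<phi>' t\<bar> \<le> M * (t - x) ^ n / fact n" if t: "t \<in> {x..x+s}" for t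
  proof -
    have sub: "{x..t} \<subseteq> {x..x+s}"
      using t by auto
    have "\<bar>g (Suc 0) (x + (t - x)) - (\<Sum>m<n. g (Suc m) x * (t - x) ^ m / fact m)\<bar>
        \<le> M * (t - x) ^ n / fact n"
      by (rule Suc.IH[where g = "\<lambda>m. g (Suc m)"])
        (use t sub Suc.prems in \<open>auto intro!: DERIV_subset[OF Suc.prems(2)]\<close>)
    then show ?thesis by (simp add: \<phi>'_def)
  qed
  moreover have "(\<phi> has_real_derivative \<phi>' t) (at t within {x..x+s})" if t: "t \<in> {x..x+s}" for t
  proof -
    have shift: "(\<Sum>m<Suc n. g m x * (t - x) ^ m / fact m)
        = g 0 x + (\<Sum>m<n. g (Suc m) x * (t - x) ^ Suc m / fact (Suc m))" for t
      by (subst sum.lessThan_Suc_shift) simp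
    have "((\<lambda>t. \<Sum>m<n. g (Suc m) x * (t - x) ^ Suc m / fact (Suc m)) has_real_derivative
        (\<Sum>m<n. g (Suc m) x * (real (Suc m) * (t - x) ^ m) / fact (Suc m))) (at t within {x..x+s})"
      by (intro DERIV_sum DERIV_cdivide DERIV_cmult DERIV_power_diff)
    also have "(\<Sum>m<n. g (Suc m) x * (real (Suc m) * (t - x) ^ m) / fact (Suc m))
        = (\<Sum>m<n. g (Suc m) x * (t - x) ^ m / fact m)"
      by (intro sum.cong refl) (simp add: field_simps del: of_nat_Suc)
    finally have "((\<lambda>t. \<Sum>m<Suc n. g m x * (t - x) ^ m / fact m) has_real_derivative
        (\<Sum>m<n. g (Suc m) x * (t - x) ^ m / fact m)) (at t within {x..x+s})"
      unfolding shift using DERIV_add[OF DERIV_const] by fastforce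
    then show ?thesis
      unfolding \<phi>_def[abs_def] \<phi>'_def using Suc.prems(2)[of 0 t] t by (auto intro: DERIV_diff)
  qed
  moreover have "\<phi> x = 0"
    by (simp add: \<phi>_def sum.lessThan_Suc_shift)
  ultimately have "\<bar>\<phi> (x + s)\<bar> \<le> M * s ^ Suc n / fact (Suc n)"
    using abs_le_of_derivative_bound_power[OF Suc.prems(1)] by blast
  then show ?case by (simp add: \<phi>_def)
qed

lemma taylor_remainder_bound:
  fixes g :: "nat \<Rightarrow> real \<Rightarrow> real"
  assumes g': "\<And>m t. m < n \<Longrightarrow> (g m has_real_derivative g (Suc m) t) (at t)"
    and bound: "\<And>t. \<bar>g n t\<bar> \<le> M"
  shows "\<bar>g 0 (v + q) - (\<Sum>m<n. g m v * q ^ m / fact m)\<bar> \<le> M * \<bar>q\<bar> ^ n / fact n"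
proof (cases "q \<ge> 0")
  case True
  then show ?thesis
    using taylor_remainder_bound_within[of q n v g M] g' bound
    by (auto intro: has_field_derivative_at_within)
next
  case False
  define h where "h m t = (-1) ^ m * g m (2 * v - t)" for m t
  have "((\<lambda>t. (-1) ^ m * g m (2 * v - t)) has_real_derivative
      (-1) ^ m * (g (Suc m) (2 * v - t) * (0 - 1))) (at t)" if "m < n" for m t
    by (intro DERIV_cmult DERIV_chain2[OF g'[OF that]]) (auto intro!: derivative_eq_intros)
  then have "\<bar>h 0 (v + - q) - (\<Sum>m<n. h m v * (- q) ^ m / fact m)\<bar> \<le> M * (- q) ^ n / fact n"
    using False bound
    by (intro taylor_remainder_bound_within)
      (auto simp: h_def abs_mult intro: has_field_derivative_at_within)
  moreover have "(\<Sum>m<n. h m v * (- q) ^ m / fact m) = (\<Sum>m<n. g m v * q ^ m / fact m)"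
    by (intro sum.cong refl) (simp add: h_def power_minus')
  ultimately show ?thesis
    using False by (simp add: h_def)
qed

lemma has_real_derivative_partial_uniform:
  fixes \<phi> \<phi>x :: "real \<Rightarrow> real \<Rightarrow> real" and z :: "real \<Rightarrow> real"
  assumes \<phi>x: "\<And>t u. t \<in> S \<Longrightarrow> ((\<lambda>s. \<phi> s u) has_real_derivative \<phi>x t u) (at t within S)"
    and cont: "continuous_on (S \<times> UNIV) (\<lambda>p. \<phi>x (fst p) (snd p))"
    and "convex S" and "t \<in> S"
    and z: "continuous (at t within S) z"
  shows "((\<lambda>s. \<phi> s (z s) - \<phi> t (z s)) has_real_derivative \<phi>x t (z t)) (at t within S)"
  unfolding has_field_derivative_def has_derivative_within_alt
proof (intro conjI allI impI bounded_linear_mult_right)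
  fix e :: real
  assume "e > 0"
  have "continuous (at (t, z t) within S \<times> UNIV) (\<lambda>p. \<phi>x (fst p) (snd p))"
    using cont \<open>t \<in> S\<close> by (simp add: continuous_on_eq_continuous_within)
  then obtain d1 where "d1 > 0" and d1: "\<And>p. p \<in> S \<times> UNIV \<Longrightarrow> dist p (t, z t) < d1 \<Longrightarrow>
      dist (\<phi>x (fst p) (snd p)) (\<phi>x t (z t)) < e"
    unfolding continuous_within_eps_delta using \<open>e > 0\<close> by fastforce
  obtain d2 where "d2 > 0" and d2: "\<And>s. s \<in> S \<Longrightarrow> dist s t < d2 \<Longrightarrow> dist (z s) (z t) < d1 / 2"
    using z \<open>d1 > 0\<close> unfolding continuous_within_eps_delta by (meson half_gt_zero)
  show "\<exists>d>0. \<forall>s\<in>S. norm (s - t) < d \<longrightarrow>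
      norm (\<phi> s (z s) - \<phi> t (z s) - (\<phi> t (z t) - \<phi> t (z t)) - \<phi>x t (z t) * (s - t))
        \<le> e * norm (s - t)"
  proof (intro exI[of _ "min d2 (d1 / 2)"] conjI ballI impI)
    show "min d2 (d1 / 2) > 0"
      using \<open>d1 > 0\<close> \<open>d2 > 0\<close> by simp
    fix s
    assume "s \<in> S" and sd: "norm (s - t) < min d2 (d1 / 2)"
    have zs: "\<bar>z s - z t\<bar> < d1 / 2"
      using d2[OF \<open>s \<in> S\<close>] sd by (simp add: dist_norm)
    have seg: "closed_segment t s \<subseteq> S"
      using \<open>convex S\<close> \<open>t \<in> S\<close> \<open>s \<in> S\<close> by (simp add: closed_segment_subset)
    \<comment> \<open>mean value theorem for \<open>\<phi> \<xi> (z s) - \<xi> * \<phi>x t (z t)\<close> on the segment, with \<open>z s\<close> frozen\<close>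
    have "norm ((\<phi> s (z s) - s * \<phi>x t (z t)) - (\<phi> t (z s) - t * \<phi>x t (z t))) \<le> e * norm (s - t)"
    proof (rule field_differentiable_bound[where f' = "\<lambda>\<xi>. \<phi>x \<xi> (z s) - \<phi>x t (z t)"
          and S = "closed_segment t s"])
      fix \<xi>
      assume \<xi>: "\<xi> \<in> closed_segment t s"
      then show "((\<lambda>\<xi>. \<phi> \<xi> (z s) - \<xi> * \<phi>x t (z t)) has_field_derivative
          \<phi>x \<xi> (z s) - \<phi>x t (z t)) (at \<xi> within closed_segment t s)"
        using seg by (auto intro!: derivative_eq_intros DERIV_subset[OF \<phi>x])
      have "\<bar>\<xi> - t\<bar> \<le> \<bar>s - t\<bar>"
        using \<xi> by (metis dist_commute dist_in_closed_segment dist_real_def)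
      then have "dist (\<xi>, z s) (t, z t) < d1"
        using sd zs sqrt_sum_squares_le_sum_abs[of "\<xi> - t" "z s - z t"]
        by (simp add: dist_Pair_Pair dist_real_def)
      then show "norm (\<phi>x \<xi> (z s) - \<phi>x t (z t)) \<le> e"
        using d1[of "(\<xi>, z s)"] \<xi> seg by (auto simp: dist_norm)
    qed auto
    then show "norm (\<phi> s (z s) - \<phi> t (z s) - (\<phi> t (z t) - \<phi> t (z t)) - \<phi>x t (z t) * (s - t))
        \<le> e * norm (s - t)"
      by (simp add: algebra_simps)
  qed
qed

text \<open>Only partial derivatives of \<open>\<phi>\<close> are assumed; joint continuity of the \<open>x\<close>-partial
  stands in for differentiability of \<open>\<phi>\<close> as a function of two variables.\<close>

lemma DERIV_partials_chain_within:
  fixes \<phi> \<phi>x \<phi>u :: "real \<Rightarrow> real \<Rightarrow> real" and z :: "real \<Rightarrow> real"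
  assumes "\<And>t u. t \<in> S \<Longrightarrow> ((\<lambda>s. \<phi> s u) has_real_derivative \<phi>x t u) (at t within S)"
    and "\<And>u. (\<phi> t has_real_derivative \<phi>u t u) (at u)"
    and "continuous_on (S \<times> UNIV) (\<lambda>p. \<phi>x (fst p) (snd p))"
    and "convex S" and "t \<in> S"
    and z: "(z has_real_derivative z') (at t within S)"
  shows "((\<lambda>s. \<phi> s (z s)) has_real_derivative \<phi>x t (z t) + \<phi>u t (z t) * z') (at t within S)"
proof -
  have "((\<lambda>s. (\<phi> s (z s) - \<phi> t (z s)) + \<phi> t (z s)) has_real_derivative
      \<phi>x t (z t) + \<phi>u t (z t) * z') (at t within S)"
    using assms DERIV_continuous[OF z]
    by (intro DERIV_add has_real_derivative_partial_uniform DERIV_chain2[OF _ z])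
  then show ?thesis by simp
qed

lemma gauss_legendre_2_error:
  fixes g :: "nat \<Rightarrow> real \<Rightarrow> real"
  assumes "0 \<le> L"
    and g': "\<And>m t. m < 5 \<Longrightarrow> t \<in> {x..x+L} \<Longrightarrow>
           (g m has_real_derivative g (Suc m) t) (at t within {x..x+L})"
    and bound: "\<And>t. t \<in> {x..x+L} \<Longrightarrow> \<bar>g 5 t\<bar> \<le> M"
  shows "\<bar>g 0 x + L / 2 * (g 1 (x + L / 2 * (1 - 1 / sqrt 3)) + g 1 (x + L / 2 * (1 + 1 / sqrt 3)))
           - g 0 (x + L)\<bar> \<le> M * L ^ 5 / 20"
proof -
  define P where "P s = g 1 x + g 2 x * s + g 3 x * s ^ 2 / 2 + g 4 x * s ^ 3 / 6" for s
  have node: "\<bar>g 1 (x + s) - P s\<bar> \<le> M * L ^ 4 / 24" if "0 \<le> s" "s \<le> L" for s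
  proof -
    have "\<bar>g (Suc 0) (x + s) - (\<Sum>m<4. g (Suc m) x * s ^ m / fact m)\<bar> \<le> M * s ^ 4 / fact 4"
      using that g' bound
      by (intro taylor_remainder_bound_within[where g = "\<lambda>m. g (Suc m)"])
        (auto intro: DERIV_subset[of _ _ _ "{x..x+L}"])
    also have "\<dots> \<le> M * L ^ 4 / fact 4"
      using that bound[of x] \<open>0 \<le> L\<close> by (intro divide_right_mono mult_left_mono power_mono) auto
    finally show ?thesis
      by (simp add: P_def eval_nat_numeral)
  qed
  have endpoint: "\<bar>g 0 (x + L) - (\<Sum>m<5. g m x * L ^ m / fact m)\<bar> \<le> M * L ^ 5 / fact 5"
    using \<open>0 \<le> L\<close> g' bound by (rule taylor_remainder_bound_within)
  define c where "c = 1 / sqrt 3"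
  have c: "0 \<le> c" "c \<le> 1" "c ^ 2 = 1 / 3"
    by (auto simp: c_def power_divide)
  \<comment> \<open>the two-point rule integrates cubics exactly\<close>
  have exact: "g 0 x + L / 2 * (P (L / 2 * (1 - c)) + P (L / 2 * (1 + c)))
      = (\<Sum>m<5. g m x * L ^ m / fact m)"
  proof -
    have "L / 2 * (P (L / 2 * (1 - c)) + P (L / 2 * (1 + c)))
        = g 1 x * L + g 2 x * L ^ 2 / 2 + g 3 x * L ^ 3 * (1 + c ^ 2) / 8
          + g 4 x * L ^ 4 * (1 + 3 * c ^ 2) / 48"
      by (simp add: P_def field_simps power2_eq_square power3_eq_cube power4_eq_xxxx)
    also have "\<dots> = g 1 x * L + g 2 x * L ^ 2 / 2 + g 3 x * L ^ 3 / 6 + g 4 x * L ^ 4 / 24"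
      unfolding c(3) by (simp add: algebra_simps)
    finally show ?thesis
      by (simp add: eval_nat_numeral)
  qed
  define E1 where "E1 = g 1 (x + L / 2 * (1 - c)) - P (L / 2 * (1 - c))"
  define E2 where "E2 = g 1 (x + L / 2 * (1 + c)) - P (L / 2 * (1 + c))"
  define E0 where "E0 = g 0 (x + L) - (\<Sum>m<5. g m x * L ^ m / fact m)"
  have "\<bar>E1\<bar> \<le> M * L ^ 4 / 24"
    unfolding E1_def by (rule node) (use \<open>0 \<le> L\<close> c in \<open>auto intro: mult_left_mono\<close>)
  moreover have "\<bar>E2\<bar> \<le> M * L ^ 4 / 24"
    unfolding E2_def by (rule node) (use \<open>0 \<le> L\<close> c in \<open>auto intro: mult_left_mono\<close>)
  ultimately have "\<bar>E1 + E2\<bar> \<le> M * L ^ 4 / 24 + M * L ^ 4 / 24"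
    by linarith
  from mult_left_mono[OF this, of "L / 2"]
  have nodes: "\<bar>L / 2 * (E1 + E2)\<bar> \<le> L / 2 * (M * L ^ 4 / 24 + M * L ^ 4 / 24)"
    using \<open>0 \<le> L\<close> by (simp add: abs_mult)
  have "\<bar>g 0 x + L / 2 * (g 1 (x + L / 2 * (1 - c)) + g 1 (x + L / 2 * (1 + c))) - g 0 (x + L)\<bar>
      = \<bar>L / 2 * (E1 + E2) - E0\<bar>"
    using exact unfolding E0_def E1_def E2_def by (simp add: algebra_simps)
  also have "\<dots> \<le> L / 2 * (M * L ^ 4 / 24 + M * L ^ 4 / 24) + M * L ^ 5 / fact 5"
    using nodes endpoint unfolding E0_def by linarith
  also have "\<dots> = M * L ^ 5 / 20"
    by (simp add: eval_nat_numeral field_simps)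
  finally show ?thesis
    by (simp only: c_def)
qed

lemma linear_recurrence_bound:
  fixes e :: "nat \<Rightarrow> real"
  assumes "e 0 \<le> 0" and "0 \<le> L" and "0 \<le> B"
    and step: "\<And>k. k < n \<Longrightarrow> e (Suc k) \<le> (1 + L) * e k + B"
  shows "e n \<le> real n * B * exp (real n * L)"
  using step
proof (induction n)
  case 0
  then show ?case using \<open>e 0 \<le> 0\<close> by simp
next
  case (Suc n)
  have "(1 + L) * exp (real n * L) \<le> exp L * exp (real n * L)"
    by (simp add: add.commute)
  then have growth: "(1 + L) * exp (real n * L) \<le> exp (real (Suc n) * L)"
    by (simp add: mult_exp_exp algebra_simps)
  have "B \<le> B * exp (real (Suc n) * L)"
    using \<open>0 \<le> L\<close> \<open>0 \<le> B\<close> by (simp add: mult_le_cancel_left1)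
  have "e (Suc n) \<le> (1 + L) * (real n * B * exp (real n * L)) + B"
    using Suc \<open>0 \<le> L\<close> by (intro order_trans[OF Suc.prems] add_mono mult_left_mono) auto
  also have "\<dots> \<le> real n * B * exp (real (Suc n) * L) + B * exp (real (Suc n) * L)"
    using growth \<open>B \<le> B * exp (real (Suc n) * L)\<close> \<open>0 \<le> L\<close> \<open>0 \<le> B\<close>
    by (intro add_mono) (auto simp: mult.left_commute[of "1 + L"] intro: mult_left_mono)
  finally show ?case
    by (simp add: algebra_simps)
qed

lemma finite_uniform_bound:
  assumes "finite I" and "\<And>i. i \<in> I \<Longrightarrow> \<exists>M. \<forall>x\<in>S. \<bar>g i x\<bar> \<le> M"
  shows "\<exists>M\<ge>1. \<forall>i\<in>I. \<forall>x\<in>S. \<bar>g i x\<bar> \<le> (M :: real)"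
  using assms
proof (induction I rule: finite_induct)
  case empty
  then show ?case by auto
next
  case (insert i I)
  then obtain M1 M2 where "M1 \<ge> 1" "\<forall>j\<in>I. \<forall>x\<in>S. \<bar>g j x\<bar> \<le> M1" "\<forall>x\<in>S. \<bar>g i x\<bar> \<le> M2"
    by (metis insertCI)
  then show ?case
    by (intro exI[of _ "max M1 M2"]) (auto intro: le_max_iff_disj[THEN iffD2])
qed

section \<open>Derivatives of the solution\<close>

text \<open>Polynomials in the partial derivatives \<open>D i j\<close> of \<open>f\<close>. Along a solution,
  \<open>d/dt g(t, y t) = g\<^sub>x + g\<^sub>u * f\<close> (\<open>pderiv_total\<close>), so iterating \<open>pderiv_total\<close> on
  \<open>Partial 0 0 = f\<close> produces the derivatives of \<open>y\<close>.\<close>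

datatype pexpr = Partial nat nat | Plus pexpr pexpr | Times pexpr pexpr

fun peval :: "(nat \<Rightarrow> nat \<Rightarrow> real \<Rightarrow> real \<Rightarrow> real) \<Rightarrow> pexpr \<Rightarrow> real \<Rightarrow> real \<Rightarrow> real" where
  "peval D (Partial i j) x u = D i j x u"
| "peval D (Plus e1 e2) x u = peval D e1 x u + peval D e2 x u"
| "peval D (Times e1 e2) x u = peval D e1 x u * peval D e2 x u"

fun porder :: "pexpr \<Rightarrow> nat" where
  "porder (Partial i j) = i + j"
| "porder (Plus e1 e2) = max (porder e1) (porder e2)"
| "porder (Times e1 e2) = max (porder e1) (porder e2)"

fun pderiv_x :: "pexpr \<Rightarrow> pexpr" where
  "pderiv_x (Partial i j) = Partial (Suc i) j"
| "pderiv_x (Plus e1 e2) = Plus (pderiv_x e1) (pderiv_x e2)"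
| "pderiv_x (Times e1 e2) = Plus (Times (pderiv_x e1) e2) (Times e1 (pderiv_x e2))"

fun pderiv_u :: "pexpr \<Rightarrow> pexpr" where
  "pderiv_u (Partial i j) = Partial i (Suc j)"
| "pderiv_u (Plus e1 e2) = Plus (pderiv_u e1) (pderiv_u e2)"
| "pderiv_u (Times e1 e2) = Plus (Times (pderiv_u e1) e2) (Times e1 (pderiv_u e2))"

definition pderiv_total :: "pexpr \<Rightarrow> pexpr" where
  "pderiv_total e = Plus (pderiv_x e) (Times (pderiv_u e) (Partial 0 0))"

fun pbound :: "real \<Rightarrow> pexpr \<Rightarrow> real" where
  "pbound M (Partial i j) = M"
| "pbound M (Plus e1 e2) = pbound M e1 + pbound M e2"
| "pbound M (Times e1 e2) = pbound M e1 * pbound M e2"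

lemma porder_pderiv_x [simp]: "porder (pderiv_x e) = Suc (porder e)"
  by (induction e) auto

lemma porder_pderiv_u [simp]: "porder (pderiv_u e) = Suc (porder e)"
  by (induction e) auto

lemma porder_pderiv_total_iterate: "porder ((pderiv_total ^^ k) (Partial 0 0)) = k"
  by (induction k) (auto simp: pderiv_total_def)

lemma pbound_nonneg: "0 \<le> M \<Longrightarrow> 0 \<le> pbound M e"
  by (induction e) auto

locale ivp_smooth =
  fixes f :: "real \<Rightarrow> real \<Rightarrow> real" and y :: "real \<Rightarrow> real" and a b :: real
    and D :: "nat \<Rightarrow> nat \<Rightarrow> real \<Rightarrow> real \<Rightarrow> real"
  assumes ab: "a < b"
    and D00: "\<And>x u. D 0 0 x u = f x u"
    and Dx: "\<And>i j x u. i + j < 4 \<Longrightarrow> x \<in> {a..b} \<Longrightarrow>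
               ((\<lambda>t. D i j t u) has_real_derivative D (Suc i) j x u) (at x within {a..b})"
    and Du: "\<And>i j x u. i + j < 4 \<Longrightarrow> x \<in> {a..b} \<Longrightarrow>
               ((\<lambda>s. D i j x s) has_real_derivative D i (Suc j) x u) (at u)"
    and Dcont: "\<And>i j. i + j \<le> 4 \<Longrightarrow>
               continuous_on ({a..b} \<times> UNIV) (\<lambda>p. D i j (fst p) (snd p))"
    and Dbdd: "\<And>i j. i + j \<le> 4 \<Longrightarrow> \<exists>M. \<forall>x\<in>{a..b}. \<forall>u. \<bar>D i j x u\<bar> \<le> M"
    and sol: "\<And>x. x \<in> {a..b} \<Longrightarrow> (y has_real_derivative f x (y x)) (at x within {a..b})"
begin

definition Dmax :: real where
  "Dmax = (SOME M. 1 \<le> M \<and> (\<forall>i j x u. i + j \<le> 4 \<longrightarrow> x \<in> {a..b} \<longrightarrow> \<bar>D i j x u\<bar> \<le> M))"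

lemma Dmax: "1 \<le> Dmax" "i + j \<le> 4 \<Longrightarrow> x \<in> {a..b} \<Longrightarrow> \<bar>D i j x u\<bar> \<le> Dmax"
proof -
  have "finite {(i, j). i + j \<le> (4::nat)}"
    by (rule finite_subset[of _ "{..4} \<times> {..4}"]) auto
  then obtain M where "M \<ge> 1"
    and "\<forall>p\<in>{(i, j). i + j \<le> 4}. \<forall>q\<in>{a..b} \<times> UNIV. \<bar>D (fst p) (snd p) (fst q) (snd q)\<bar> \<le> M"
    using finite_uniform_bound[of "{(i, j). i + j \<le> 4}" "{a..b} \<times> UNIV"
        "\<lambda>p q. D (fst p) (snd p) (fst q) (snd q)"] Dbdd by fastforce
  then have "\<exists>M. 1 \<le> M \<and> (\<forall>i j x u. i + j \<le> 4 \<longrightarrow> x \<in> {a..b} \<longrightarrow> \<bar>D i j x u\<bar> \<le> M)"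
    by fastforce
  from someI_ex[OF this] show "1 \<le> Dmax" "i + j \<le> 4 \<Longrightarrow> x \<in> {a..b} \<Longrightarrow> \<bar>D i j x u\<bar> \<le> Dmax"
    unfolding Dmax_def by blast+
qed

lemma peval_has_derivative_x:
  "porder e < 4 \<Longrightarrow> x \<in> {a..b} \<Longrightarrow>
    ((\<lambda>t. peval D e t u) has_real_derivative peval D (pderiv_x e) x u) (at x within {a..b})"
  by (induction e) (auto intro!: derivative_eq_intros Dx)

lemma peval_has_derivative_u:
  "porder e < 4 \<Longrightarrow> x \<in> {a..b} \<Longrightarrow>
    (peval D e x has_real_derivative peval D (pderiv_u e) x u) (at u)"
proof -
  have "peval D (Partial i j) x = D i j x"
    "peval D (Plus e1 e2) x = (\<lambda>u. peval D e1 x u + peval D e2 x u)"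
    "peval D (Times e1 e2) x = (\<lambda>u. peval D e1 x u * peval D e2 x u)" for i j e1 e2
    by (auto simp: fun_eq_iff)
  then show "porder e < 4 \<Longrightarrow> x \<in> {a..b} \<Longrightarrow>
      (peval D e x has_real_derivative peval D (pderiv_u e) x u) (at u)"
    by (induction e arbitrary: u) (auto intro!: derivative_eq_intros Du)
qed

lemma peval_continuous_on:
  "porder e \<le> 4 \<Longrightarrow> continuous_on ({a..b} \<times> UNIV) (\<lambda>p. peval D e (fst p) (snd p))"
  by (induction e) (auto intro!: continuous_on_add continuous_on_mult Dcont)

lemma peval_bound: "porder e \<le> 4 \<Longrightarrow> x \<in> {a..b} \<Longrightarrow> \<bar>peval D e x u\<bar> \<le> pbound Dmax e"
proof (induction e)
  case (Partial i j)
  then show ?case using Dmax by simp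
next
  case (Plus e1 e2)
  then show ?case by (auto intro: order_trans[OF abs_triangle_ineq])
next
  case (Times e1 e2)
  then show ?case
    using pbound_nonneg[of Dmax e1] Dmax(1) by (auto simp: abs_mult intro!: mult_mono)
qed

lemma peval_along_solution:
  assumes "porder e < 4" and "t \<in> {a..b}"
  shows "((\<lambda>s. peval D e s (y s)) has_real_derivative peval D (pderiv_total e) t (y t))
    (at t within {a..b})"
proof -
  have "((\<lambda>s. peval D e s (y s)) has_real_derivative
      peval D (pderiv_x e) t (y t) + peval D (pderiv_u e) t (y t) * f t (y t)) (at t within {a..b})"
    by (rule DERIV_partials_chain_within[OF peval_has_derivative_x peval_has_derivative_u
          peval_continuous_on _ _ sol]) (use assms in auto)
  then show ?thesis by (simp add: pderiv_total_def D00)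
qed

definition ydiff :: "nat \<Rightarrow> real \<Rightarrow> real" where
  "ydiff m t = (case m of 0 \<Rightarrow> y t | Suc k \<Rightarrow> peval D ((pderiv_total ^^ k) (Partial 0 0)) t (y t))"

lemma ydiff_0: "ydiff 0 = y"
  by (simp add: ydiff_def fun_eq_iff)

lemma ydiff_has_derivative:
  assumes "m \<le> 4" and "t \<in> {a..b}"
  shows "(ydiff m has_real_derivative ydiff (Suc m) t) (at t within {a..b})"
proof (cases m)
  case 0
  then show ?thesis
    using sol[OF \<open>t \<in> {a..b}\<close>] by (simp add: ydiff_0 ydiff_def D00)
next
  case (Suc k)
  then show ?thesis
    using assms peval_along_solution[of "(pderiv_total ^^ k) (Partial 0 0)" t]
    by (simp add: ydiff_def[abs_def] porder_pderiv_total_iterate)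
qed

lemma ydiff_bounded:
  assumes "1 \<le> m" and "m \<le> 5"
  obtains B where "\<And>t. t \<in> {a..b} \<Longrightarrow> \<bar>ydiff m t\<bar> \<le> B"
proof -
  obtain k where "m = Suc k"
    using \<open>1 \<le> m\<close> by (cases m) auto
  then show ?thesis
    using that assms peval_bound[of "(pderiv_total ^^ k) (Partial 0 0)"]
    by (auto simp: ydiff_def porder_pderiv_total_iterate)
qed

definition f_total1 :: "real \<Rightarrow> real \<Rightarrow> real" where
  "f_total1 x v = D 1 0 x v + D 0 1 x v * D 0 0 x v"

definition f_total2 :: "real \<Rightarrow> real \<Rightarrow> real" where
  "f_total2 x v = D 2 0 x v + 2 * D 1 1 x v * D 0 0 x v + D 0 2 x v * D 0 0 x v ^ 2
     + D 0 1 x v * f_total1 x v"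

lemma ydiff_1: "ydiff 1 t = f t (y t)"
  and ydiff_2: "ydiff 2 t = f_total1 t (y t)"
  and ydiff_3: "ydiff 3 t = f_total2 t (y t)"
  by (simp_all add: ydiff_def pderiv_total_def f_total1_def f_total2_def D00 eval_nat_numeral
      algebra_simps power2_eq_square)

section \<open>Local and global error of RK3GL2\<close>

lemma taylor_D_x:
  assumes "a \<le> x" and "0 \<le> p" and "x + p \<le> b" and "i + j + n \<le> 4"
  shows "\<bar>D i j (x + p) u - (\<Sum>m<n. D (i + m) j x u * p ^ m / fact m)\<bar> \<le> Dmax * p ^ n / fact n"
proof -
  have "{x..x+p} \<subseteq> {a..b}"
    using assms by auto
  then have "\<bar>(\<lambda>m t. D (i + m) j t u) 0 (x + p)
      - (\<Sum>m<n. (\<lambda>m t. D (i + m) j t u) m x * p ^ m / fact m)\<bar> \<le> Dmax * p ^ n / fact n"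
    using assms Dmax(2)[of "i + n" j _ u]
    by (intro taylor_remainder_bound_within) (auto intro!: DERIV_subset[OF Dx])
  then show ?thesis by simp
qed

lemma taylor_D_u:
  assumes "x \<in> {a..b}" and "i + j + n \<le> 4"
  shows "\<bar>D i j x (v + q) - (\<Sum>m<n. D i (j + m) x v * q ^ m / fact m)\<bar> \<le> Dmax * \<bar>q\<bar> ^ n / fact n"
proof -
  have "\<bar>(\<lambda>m. D i (j + m) x) 0 (v + q) - (\<Sum>m<n. (\<lambda>m. D i (j + m) x) m v * q ^ m / fact m)\<bar>
      \<le> Dmax * \<bar>q\<bar> ^ n / fact n"
    using assms Du[of i "j + _" x] Dmax(2)[of i "j + n" x]
    by (intro taylor_remainder_bound) auto
  then show ?thesis by simp
qed

lemma f_increment_bound: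
  assumes "a \<le> x" and "0 \<le> p" and "x + p \<le> b"
  shows "\<bar>f (x + p) (v + q) - f x v\<bar> \<le> Dmax * (p + \<bar>q\<bar>)"
proof -
  have "\<bar>D 0 0 (x + p) (v + q) - D 0 0 x (v + q)\<bar> \<le> Dmax * p"
    using taylor_D_x[OF assms, of 0 0 1 "v + q"] by simp
  moreover have "\<bar>D 0 0 x (v + q) - D 0 0 x v\<bar> \<le> Dmax * \<bar>q\<bar>"
    using taylor_D_u[of x 0 0 1 v q] assms by simp
  ultimately show ?thesis
    by (simp add: D00[symmetric] distrib_left)
qed

lemma f_lipschitz: "x \<in> {a..b} \<Longrightarrow> \<bar>f x u - f x w\<bar> \<le> Dmax * \<bar>u - w\<bar>"
  using f_increment_bound[of x 0 w "u - w"] by simp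

definition ftaylor2 :: "real \<Rightarrow> real \<Rightarrow> real \<Rightarrow> real \<Rightarrow> real" where
  "ftaylor2 x v p q = D 0 0 x v + p * D 1 0 x v + q * D 0 1 x v
     + (p ^ 2 * D 2 0 x v + 2 * p * q * D 1 1 x v + q ^ 2 * D 0 2 x v) / 2"

lemma ftaylor2_error:
  assumes "a \<le> x" and "0 \<le> p" and "x + p \<le> b"
  shows "\<bar>f (x + p) (v + q) - ftaylor2 x v p q\<bar> \<le> Dmax * (p + \<bar>q\<bar>) ^ 3"
proof -
  have x: "x \<in> {a..b}"
    using assms by auto
  define e1 where "e1 = D 0 0 (x + p) (v + q)
    - (D 0 0 x (v + q) + D 1 0 x (v + q) * p + D 2 0 x (v + q) * p ^ 2 / 2)"
  define e2 where "e2 = D 0 0 x (v + q) - (D 0 0 x v + D 0 1 x v * q + D 0 2 x v * q ^ 2 / 2)"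
  define e3 where "e3 = D 1 0 x (v + q) - (D 1 0 x v + D 1 1 x v * q)"
  define e4 where "e4 = D 2 0 x (v + q) - D 2 0 x v"
  have "f (x + p) (v + q) - ftaylor2 x v p q = e1 + e2 + p * e3 + p ^ 2 / 2 * e4"
    unfolding e1_def e2_def e3_def e4_def ftaylor2_def D00[symmetric]
    by (simp add: algebra_simps power2_eq_square)
  also have "\<bar>\<dots>\<bar> \<le> Dmax * p ^ 3 / 6 + Dmax * \<bar>q\<bar> ^ 3 / 6 + p * (Dmax * \<bar>q\<bar> ^ 2 / 2)
      + p ^ 2 / 2 * (Dmax * \<bar>q\<bar>)"
  proof (intro abs_add_le abs_mult_le)
    show "\<bar>e1\<bar> \<le> Dmax * p ^ 3 / 6"
      using taylor_D_x[OF assms, of 0 0 3 "v + q"] by (simp add: e1_def eval_nat_numeral)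
    show "\<bar>e2\<bar> \<le> Dmax * \<bar>q\<bar> ^ 3 / 6"
      using taylor_D_u[OF x, of 0 0 3 v q] by (simp add: e2_def eval_nat_numeral)
    show "\<bar>e3\<bar> \<le> Dmax * \<bar>q\<bar> ^ 2 / 2"
      using taylor_D_u[OF x, of 1 0 2 v q] by (simp add: e3_def eval_nat_numeral)
    show "\<bar>e4\<bar> \<le> Dmax * \<bar>q\<bar>"
      using taylor_D_u[OF x, of 2 0 1 v q] by (simp add: e4_def)
  qed (use \<open>0 \<le> p\<close> in auto)
  also have "\<dots> \<le> Dmax * (p + \<bar>q\<bar>) ^ 3"
  proof -
    have "0 \<le> Dmax * (p ^ 2 * \<bar>q\<bar>)" "0 \<le> Dmax * (p * \<bar>q\<bar> ^ 2)" "0 \<le> Dmax * p ^ 3"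
      "0 \<le> Dmax * \<bar>q\<bar> ^ 3"
      using Dmax(1) \<open>0 \<le> p\<close> by auto
    then show ?thesis
      by (simp add: power3_eq_cube power2_eq_square algebra_simps)
  qed
  finally show ?thesis .
qed

lemma ftaylor2_stage_error:
  assumes "a \<le> x" and "0 \<le> p" and "x + p \<le> b" and "\<bar>s\<bar> \<le> Dmax"
  shows "\<bar>f (x + p) (v + p * s) - ftaylor2 x v p (p * s)\<bar> \<le> Dmax * (1 + Dmax) ^ 3 * p ^ 3"
proof -
  have "p + \<bar>p * s\<bar> \<le> p * (1 + Dmax)"
    using \<open>0 \<le> p\<close> mult_left_mono[OF \<open>\<bar>s\<bar> \<le> Dmax\<close> \<open>0 \<le> p\<close>] by (simp add: abs_mult algebra_simps)
  then have "Dmax * (p + \<bar>p * s\<bar>) ^ 3 \<le> Dmax * (p * (1 + Dmax)) ^ 3"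
    using Dmax(1) \<open>0 \<le> p\<close> by (intro mult_left_mono power_mono) auto
  then show ?thesis
    using ftaylor2_error[OF assms(1-3), of v "p * s"] by (simp add: power_mult_distrib mult_ac)
qed

lemma f_stage_increment:
  assumes "a \<le> x" and "0 \<le> p" and "x + p \<le> b" and "\<bar>s\<bar> \<le> Dmax"
  shows "\<bar>f (x + p) (v + p * s) - f x v\<bar> \<le> Dmax * (1 + Dmax) * p"
proof -
  have "\<bar>f (x + p) (v + p * s) - f x v\<bar> \<le> Dmax * (p + \<bar>p * s\<bar>)"
    by (rule f_increment_bound[OF assms(1-3)])
  also have "\<dots> \<le> Dmax * (p * (1 + Dmax))"
    using \<open>0 \<le> p\<close> mult_left_mono[OF \<open>\<bar>s\<bar> \<le> Dmax\<close> \<open>0 \<le> p\<close>] Dmax(1)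
    by (intro mult_left_mono) (auto simp: abs_mult algebra_simps)
  finally show ?thesis
    by (simp add: mult_ac)
qed

lemma hessian_form_bound:
  assumes "x \<in> {a..b}" and "\<bar>s\<bar> \<le> Dmax"
  shows "\<bar>D 2 0 x v + 2 * D 1 1 x v * s + D 0 2 x v * s ^ 2\<bar> \<le> Dmax * (1 + Dmax) ^ 2"
proof -
  have "\<bar>s ^ 2\<bar> \<le> Dmax ^ 2"
    using power_mono[OF \<open>\<bar>s\<bar> \<le> Dmax\<close>, of 2] by (simp add: power_abs)
  then have "\<bar>D 2 0 x v + 2 * D 1 1 x v * s + D 0 2 x v * s ^ 2\<bar> \<le> Dmax + 2 * Dmax * Dmax + Dmax * Dmax ^ 2"
    using Dmax(2)[OF _ \<open>x \<in> {a..b}\<close>] \<open>\<bar>s\<bar> \<le> Dmax\<close>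
    by (intro abs_add_le abs_mult_le) auto
  then show ?thesis
    by (simp add: power2_eq_square algebra_simps)
qed

lemma rk3_incr_expansion:
  obtains K where "\<And>x v e. a \<le> x \<Longrightarrow> 0 \<le> e \<Longrightarrow> x + e \<le> b \<Longrightarrow>
    \<bar>rk3_incr f x v e - e * (f x v + e / 2 * f_total1 x v + e ^ 2 / 6 * f_total2 x v)\<bar> \<le> K * e ^ 4"
proof -
  define M where "M = Dmax"
  define c where "c = 1 + M"
  define R where "R = M * c ^ 3"
  define K where "K = R / 24 + 3 / 16 * R + M * (M * c ^ 2 / 8 + (b - a) * R / 8) / 3 + M ^ 2 * c ^ 2 / 8"
  have "0 \<le> M" "0 \<le> c" "0 \<le> R"
    using Dmax(1) by (auto simp: M_def c_def R_def)
  show ?thesis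
  proof (rule that[of K])
    fix x v e
    assume "a \<le> x" "0 \<le> e" "x + e \<le> b"
    then have "x \<in> {a..b}" "x + e / 2 \<in> {a..b}" and "e \<le> b - a"
      by auto
    define F where "F = D 0 0 x v"
    define Fu where "Fu = D 0 1 x v"
    define Fxu where "Fxu = D 1 1 x v"
    define Fuu where "Fuu = D 0 2 x v"
    define A2 where "A2 = f_total2 x v - Fu * f_total1 x v"
    define f2 where "f2 = f (x + e / 2) (v + e / 2 * F)"
    define f3 where "f3 = f (x + 3 * e / 4) (v + 3 * e / 4 * f2)"
    have bounds: "\<bar>F\<bar> \<le> M" "\<bar>Fu\<bar> \<le> M" "\<bar>Fxu\<bar> \<le> M" "\<bar>Fuu\<bar> \<le> M" "\<bar>f2\<bar> \<le> M"
      using Dmax(2) \<open>x \<in> {a..b}\<close> \<open>x + e / 2 \<in> {a..b}\<close>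
      by (auto simp: M_def F_def Fu_def Fxu_def Fuu_def f2_def D00[symmetric])
    \<comment> \<open>\<open>ftaylor2\<close> is quadratic in its last argument, so moving that argument of the third
      stage from \<open>3e/4 * F\<close> to \<open>3e/4 * f2\<close> costs exactly \<open>3e/4 * g * (Fu + S)\<close>, where
      \<open>g = f2 - F = O(e)\<close> and \<open>S = O(e)\<close>.\<close>
    define r2 where "r2 = f2 - ftaylor2 x v (e / 2) (e / 2 * F)"
    define r3 where "r3 = f3 - ftaylor2 x v (3 * e / 4) (3 * e / 4 * f2)"
    define g where "g = f2 - F"
    define S where "S = 3 * e / 4 * Fxu + 3 * e / 8 * (f2 + F) * Fuu"
    have expand: "rk3_incr f x v e - e * (f x v + e / 2 * f_total1 x v + e ^ 2 / 6 * f_total2 x v)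
        = e * (r2 / 3 + 4 / 9 * r3 + e / 3 * Fu * (e ^ 2 / 8 * A2 + r2) + e / 3 * g * S)"
      unfolding rk3_incr_def Let_def r2_def r3_def g_def S_def A2_def ftaylor2_def f_total1_def
        f_total2_def f2_def f3_def F_def Fu_def Fxu_def Fuu_def D00
      by (simp add: field_simps power2_eq_square)
    have "\<bar>r2 / 3 + 4 / 9 * r3 + e / 3 * Fu * (e ^ 2 / 8 * A2 + r2) + e / 3 * g * S\<bar> \<le> K * e ^ 3"
    proof -
      have r2: "\<bar>r2\<bar> \<le> R * (e / 2) ^ 3" and r3: "\<bar>r3\<bar> \<le> R * (3 * e / 4) ^ 3"
        using ftaylor2_stage_error[of x "e / 2" F v] ftaylor2_stage_error[of x "3 * e / 4" f2 v]
          bounds \<open>a \<le> x\<close> \<open>0 \<le> e\<close> \<open>x + e \<le> b\<close>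
        by (auto simp: r2_def r3_def f2_def f3_def R_def c_def M_def mult.commute)
      have g: "\<bar>g\<bar> \<le> M * c * (e / 2)"
        using f_stage_increment[of x "e / 2" F v] bounds \<open>a \<le> x\<close> \<open>0 \<le> e\<close> \<open>x + e \<le> b\<close>
        by (auto simp: g_def f2_def F_def D00 c_def M_def mult.commute)
      have S: "\<bar>S\<bar> \<le> 3 * e / 4 * M + 3 * e / 8 * (M + M) * M"
        unfolding S_def using bounds \<open>0 \<le> e\<close> by (intro abs_add_le abs_mult_le) auto
      have "\<bar>A2\<bar> \<le> M * c ^ 2"
        using hessian_form_bound[OF \<open>x \<in> {a..b}\<close>, of F v] bounds(1)
        by (simp add: A2_def f_total2_def F_def Fu_def M_def c_def algebra_simps)
      moreover have "R * (e / 2) ^ 3 \<le> e ^ 2 * ((b - a) * R / 8)"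
        using mult_left_mono[OF mult_right_mono[OF \<open>e \<le> b - a\<close> \<open>0 \<le> R\<close>], of "e ^ 2 / 8"] \<open>0 \<le> e\<close>
        by (simp add: power3_eq_cube power2_eq_square field_simps)
      ultimately have mid: "\<bar>e ^ 2 / 8 * A2 + r2\<bar> \<le> e ^ 2 / 8 * (M * c ^ 2) + e ^ 2 * ((b - a) * R / 8)"
        using r2 by (intro abs_add_le abs_mult_le) auto
      have "\<bar>e / 3 * Fu * (e ^ 2 / 8 * A2 + r2)\<bar>
          \<le> e / 3 * M * (e ^ 2 / 8 * (M * c ^ 2) + e ^ 2 * ((b - a) * R / 8))"
        using bounds mid \<open>0 \<le> e\<close> by (intro abs_mult_le) auto
      moreover have "\<bar>e / 3 * g * S\<bar>
          \<le> e / 3 * (M * c * (e / 2)) * (3 * e / 4 * M + 3 * e / 8 * (M + M) * M)"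
        using g S \<open>0 \<le> e\<close> by (intro abs_mult_le) auto
      ultimately have "\<bar>r2 / 3 + 4 / 9 * r3 + e / 3 * Fu * (e ^ 2 / 8 * A2 + r2) + e / 3 * g * S\<bar>
          \<le> R * (e / 2) ^ 3 / 3 + 4 / 9 * (R * (3 * e / 4) ^ 3)
            + e / 3 * M * (e ^ 2 / 8 * (M * c ^ 2) + e ^ 2 * ((b - a) * R / 8))
            + e / 3 * (M * c * (e / 2)) * (3 * e / 4 * M + 3 * e / 8 * (M + M) * M)"
        using r2 r3 by (intro abs_add_le) auto
      also have "\<dots> = K * e ^ 3"
        by (simp add: K_def c_def power2_eq_square power3_eq_cube field_simps)
      finally show ?thesis .
    qed
    with \<open>0 \<le> e\<close> have "\<bar>e * (r2 / 3 + 4 / 9 * r3 + e / 3 * Fu * (e ^ 2 / 8 * A2 + r2) + e / 3 * g * S)\<bar>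
        \<le> e * (K * e ^ 3)"
      by (intro abs_mult_le) auto
    then show "\<bar>rk3_incr f x v e - e * (f x v + e / 2 * f_total1 x v + e ^ 2 / 6 * f_total2 x v)\<bar>
        \<le> K * e ^ 4"
      unfolding expand by (simp add: eval_nat_numeral mult_ac)
  qed
qed

lemma rk3_local_error:
  obtains C where "\<And>x e. a \<le> x \<Longrightarrow> 0 \<le> e \<Longrightarrow> x + e \<le> b \<Longrightarrow>
    \<bar>y x + rk3_incr f x (y x) e - y (x + e)\<bar> \<le> C * e ^ 4"
proof -
  obtain K where K: "\<And>x v e. a \<le> x \<Longrightarrow> 0 \<le> e \<Longrightarrow> x + e \<le> b \<Longrightarrow>
      \<bar>rk3_incr f x v e - e * (f x v + e / 2 * f_total1 x v + e ^ 2 / 6 * f_total2 x v)\<bar> \<le> K * e ^ 4"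
    using rk3_incr_expansion by blast
  obtain M4 where M4: "\<And>t. t \<in> {a..b} \<Longrightarrow> \<bar>ydiff 4 t\<bar> \<le> M4"
    using ydiff_bounded[of 4] by auto
  show ?thesis
  proof (rule that[of "K + M4 / 24"])
    fix x e
    assume "a \<le> x" "0 \<le> e" "x + e \<le> b"
    define P where "P = e * (f x (y x) + e / 2 * f_total1 x (y x) + e ^ 2 / 6 * f_total2 x (y x))"
    have taylor: "\<bar>ydiff 0 (x + e) - (\<Sum>m<4. ydiff m x * e ^ m / fact m)\<bar> \<le> M4 * e ^ 4 / fact 4"
      using \<open>a \<le> x\<close> \<open>0 \<le> e\<close> \<open>x + e \<le> b\<close> M4
      by (intro taylor_remainder_bound_within)
        (auto intro!: DERIV_subset[OF ydiff_has_derivative, of _ _ "{x..x+e}"])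
    have sum4: "(\<Sum>m<4. g m) = g 0 + g 1 + g 2 + g 3" for g :: "nat \<Rightarrow> real"
      by (simp add: eval_nat_numeral)
    have polynomial: "(\<Sum>m<4. ydiff m x * e ^ m / fact m) = y x + P"
      unfolding sum4 P_def ydiff_0 ydiff_1 ydiff_2 ydiff_3 by (simp add: eval_nat_numeral field_simps)
    have "fact 4 = (24 :: real)"
      by (simp add: eval_nat_numeral)
    with taylor have "\<bar>y (x + e) - (y x + P)\<bar> \<le> M4 * e ^ 4 / 24"
      unfolding polynomial ydiff_0 by simp
    moreover have "\<bar>rk3_incr f x (y x) e - P\<bar> \<le> K * e ^ 4"
      unfolding P_def using K \<open>a \<le> x\<close> \<open>0 \<le> e\<close> \<open>x + e \<le> b\<close> .
    ultimately have "\<bar>(rk3_incr f x (y x) e - P) - (y (x + e) - (y x + P))\<bar> \<le> K * e ^ 4 + M4 * e ^ 4 / 24"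
      by (intro abs_diff_le)
    then show "\<bar>y x + rk3_incr f x (y x) e - y (x + e)\<bar> \<le> (K + M4 / 24) * e ^ 4"
      by (simp add: algebra_simps)
  qed
qed

lemma rk3_incr_lipschitz:
  assumes "a \<le> x" and "0 \<le> e" and "x + e \<le> b"
  shows "\<bar>rk3_incr f x w e - rk3_incr f x w' e\<bar> \<le> e * (Dmax * (1 + (b - a) * Dmax) ^ 2) * \<bar>w - w'\<bar>"
proof -
  define E where "E = e * Dmax"
  define d where "d = \<bar>w - w'\<bar>"
  have "0 \<le> E" "E \<le> (b - a) * Dmax" "0 \<le> d"
    using assms Dmax(1) by (auto simp: E_def d_def intro: mult_right_mono)
  have lip: "\<bar>e * f z u - e * f z u'\<bar> \<le> E * \<bar>u - u'\<bar>" if "z \<in> {a..b}" for z u u'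
    using mult_left_mono[OF f_lipschitz[OF that, of u u'] \<open>0 \<le> e\<close>] \<open>0 \<le> e\<close>
    by (simp add: E_def abs_mult right_diff_distrib[symmetric] mult.assoc)
  define k1 where "k1 w = e * f x w" for w
  define k2 where "k2 w = e * f (x + e / 2) (w + k1 w / 2)" for w
  define k3 where "k3 w = e * f (x + 3 * e / 4) (w + 3 * k2 w / 4)" for w
  have nodes: "x \<in> {a..b}" "x + e / 2 \<in> {a..b}" "x + 3 * e / 4 \<in> {a..b}"
    using assms by auto
  have l1: "\<bar>k1 w - k1 w'\<bar> \<le> E * d"
    unfolding k1_def d_def using lip[OF nodes(1)] .
  have "\<bar>k2 w - k2 w'\<bar> \<le> E * \<bar>(w + k1 w / 2) - (w' + k1 w' / 2)\<bar>"
    unfolding k2_def using lip[OF nodes(2)] .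
  also have "\<dots> \<le> E * (d + E * d / 2)"
    using l1 \<open>0 \<le> E\<close> by (intro mult_left_mono) (auto simp: d_def)
  finally have l2: "\<bar>k2 w - k2 w'\<bar> \<le> E * (d + E * d / 2)" .
  have "\<bar>k3 w - k3 w'\<bar> \<le> E * \<bar>(w + 3 * k2 w / 4) - (w' + 3 * k2 w' / 4)\<bar>"
    unfolding k3_def using lip[OF nodes(3)] .
  also have "\<dots> \<le> E * (d + 3 / 4 * (E * (d + E * d / 2)))"
    using l2 \<open>0 \<le> E\<close> by (intro mult_left_mono) (auto simp: d_def)
  finally have l3: "\<bar>k3 w - k3 w'\<bar> \<le> E * (d + 3 / 4 * (E * (d + E * d / 2)))" .
  have "\<bar>rk3_incr f x w e - rk3_incr f x w' e\<bar>
      \<le> 2 / 9 * (E * d) + 3 / 9 * (E * (d + E * d / 2)) + 4 / 9 * (E * (d + 3 / 4 * (E * (d + E * d / 2))))"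
  proof -
    have "rk3_incr f x w e - rk3_incr f x w' e
        = 2 / 9 * (k1 w - k1 w') + 3 / 9 * (k2 w - k2 w') + 4 / 9 * (k3 w - k3 w')"
      unfolding rk3_incr_def Let_def k1_def k2_def k3_def by (simp add: algebra_simps)
    then show ?thesis
      using l1 l2 l3 by (simp add: abs_add_le abs_mult_le)
  qed
  also have "\<dots> = E * d * (1 + E / 2 + E ^ 2 / 6)"
    by (simp add: field_simps power2_eq_square)
  also have "\<dots> \<le> E * d * (1 + (b - a) * Dmax) ^ 2"
  proof -
    define Q where "Q = (b - a) * Dmax"
    have "E \<le> Q"
      using \<open>E \<le> (b - a) * Dmax\<close> by (simp add: Q_def)
    then have "E ^ 2 \<le> Q ^ 2"
      using \<open>0 \<le> E\<close> by (intro power_mono)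
    moreover have "(1 + Q) ^ 2 = 1 + 2 * Q + Q ^ 2"
      by (simp add: power2_eq_square algebra_simps)
    ultimately have "1 + E / 2 + E ^ 2 / 6 \<le> (1 + Q) ^ 2"
      using \<open>0 \<le> E\<close> \<open>E \<le> Q\<close> zero_le_power2[of E] by linarith
    then show ?thesis
      using \<open>0 \<le> E\<close> \<open>0 \<le> d\<close> by (intro mult_left_mono) (auto simp: Q_def)
  qed
  finally show ?thesis
    by (simp add: E_def d_def algebra_simps)
qed

lemma rk3_step_error:
  obtains L C where "0 \<le> L" and "0 \<le> C"
    and "\<And>z e u. a \<le> z \<Longrightarrow> 0 \<le> e \<Longrightarrow> z + e \<le> b \<Longrightarrow>
      \<bar>u + rk3_incr f z u e - y (z + e)\<bar> \<le> (1 + e * L) * \<bar>u - y z\<bar> + C * e ^ 4"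
proof -
  obtain C where C: "\<And>x e. a \<le> x \<Longrightarrow> 0 \<le> e \<Longrightarrow> x + e \<le> b \<Longrightarrow>
      \<bar>y x + rk3_incr f x (y x) e - y (x + e)\<bar> \<le> C * e ^ 4"
    using rk3_local_error by blast
  define L where "L = Dmax * (1 + (b - a) * Dmax) ^ 2"
  show ?thesis
  proof (rule that[of L "\<bar>C\<bar>"])
    show "0 \<le> L" "0 \<le> \<bar>C\<bar>"
      using Dmax(1) by (auto simp: L_def)
    fix z e u
    assume "a \<le> z" "0 \<le> e" "z + e \<le> b"
    have "u + rk3_incr f z u e - y (z + e)
        = (u - y z) + (rk3_incr f z u e - rk3_incr f z (y z) e) + (y z + rk3_incr f z (y z) e - y (z + e))"
      by simp
    also have "\<bar>\<dots>\<bar> \<le> \<bar>u - y z\<bar> + e * L * \<bar>u - y z\<bar> + \<bar>C\<bar> * e ^ 4"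
      using rk3_incr_lipschitz[OF \<open>a \<le> z\<close> \<open>0 \<le> e\<close> \<open>z + e \<le> b\<close>, of u "y z"]
        C[OF \<open>a \<le> z\<close> \<open>0 \<le> e\<close> \<open>z + e \<le> b\<close>] mult_right_mono[OF abs_ge_self[of C], of "e ^ 4"]
      by (intro abs_add_le) (auto simp: L_def)
    finally show "\<bar>u + rk3_incr f z u e - y (z + e)\<bar> \<le> (1 + e * L) * \<bar>u - y z\<bar> + \<bar>C\<bar> * e ^ 4"
      by (simp add: algebra_simps)
  qed
qed

lemma rk3gl2_block_error:
  obtains K C where "0 \<le> K" and "0 \<le> C"
    and "\<And>x h w. a \<le> x \<Longrightarrow> 0 \<le> h \<Longrightarrow> x + 3 * h \<le> b \<Longrightarrow>
      \<bar>rk3gl2_block f h x w - y (x + 3 * h)\<bar> \<le> (1 + K * h) * \<bar>w - y x\<bar> + C * h ^ 5"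
proof -
  obtain L C1 where "0 \<le> L" "0 \<le> C1" and step: "\<And>z e u. a \<le> z \<Longrightarrow> 0 \<le> e \<Longrightarrow> z + e \<le> b \<Longrightarrow>
      \<bar>u + rk3_incr f z u e - y (z + e)\<bar> \<le> (1 + e * L) * \<bar>u - y z\<bar> + C1 * e ^ 4"
    using rk3_step_error by blast
  obtain M5 where M5: "\<And>t. t \<in> {a..b} \<Longrightarrow> \<bar>ydiff 5 t\<bar> \<le> M5"
    using ydiff_bounded[of 5] by auto
  define A where "A = 1 + (b - a) * L"
  define K where "K = 3 / 2 * Dmax * (A + A ^ 2)"
  define C where "C = 3 / 2 * Dmax * (A + 2) * (81 * C1) + M5 * 3 ^ 5 / 20"
  have "1 \<le> A"
    using ab \<open>0 \<le> L\<close> by (simp add: A_def)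
  have "0 \<le> M5"
    using M5[of a] ab by auto
  show ?thesis
  proof (rule that[of K C])
    show "0 \<le> K" "0 \<le> C"
      using Dmax(1) \<open>1 \<le> A\<close> \<open>0 \<le> C1\<close> \<open>0 \<le> M5\<close> by (auto simp: K_def C_def)
    fix x h w
    assume "a \<le> x" "0 \<le> h" "x + 3 * h \<le> b"
    define \<Delta> where "\<Delta> = \<bar>w - y x\<bar>"
    have stage: "\<bar>u + rk3_incr f z u e - y (z + e)\<bar> \<le> A * \<bar>u - y z\<bar> + 81 * C1 * h ^ 4"
      if "a \<le> z" "0 \<le> e" "e \<le> 3 * h" "z + e \<le> b" for z e u
    proof -
      have "1 + e * L \<le> A"
        using that \<open>a \<le> x\<close> \<open>x + 3 * h \<le> b\<close> \<open>0 \<le> L\<close> by (auto simp: A_def intro: mult_right_mono)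
      moreover have "C1 * e ^ 4 \<le> 81 * C1 * h ^ 4"
        using that \<open>0 \<le> C1\<close> mult_left_mono[OF power_mono[of e "3 * h" 4], of C1]
        by (simp add: algebra_simps)
      ultimately have "(1 + e * L) * \<bar>u - y z\<bar> + C1 * e ^ 4 \<le> A * \<bar>u - y z\<bar> + 81 * C1 * h ^ 4"
        by (intro add_mono mult_right_mono) auto
      with step[OF that(1,2,4), of u] show ?thesis
        by linarith
    qed
    define c where "c = 1 / sqrt 3"
    have "0 \<le> c" "c \<le> 1"
      by (auto simp: c_def)
    define x1 where "x1 = x + 3 * h / 2 * (1 - c)"
    define x2 where "x2 = x + 3 * h / 2 * (1 + c)"
    define w1 where "w1 = w + rk3_incr f x w (x1 - x)"
    define w2 where "w2 = w1 + rk3_incr f x1 w1 (x2 - x1)"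
    have nodes: "x \<le> x1" "x1 \<le> x2" "x2 \<le> x + 3 * h" "x1 - x \<le> 3 * h" "x2 - x1 \<le> 3 * h"
    proof -
      have "0 \<le> 3 * h / 2 * c" "3 * h / 2 * c \<le> 3 * h / 2"
        using \<open>0 \<le> h\<close> \<open>0 \<le> c\<close> mult_left_le[OF \<open>c \<le> 1\<close>, of "3 * h / 2"] by auto
      then show "x \<le> x1" "x1 \<le> x2" "x2 \<le> x + 3 * h" "x1 - x \<le> 3 * h" "x2 - x1 \<le> 3 * h"
        unfolding x1_def x2_def right_diff_distrib distrib_left by linarith+
    qed
    have "x1 \<in> {a..b}" "x2 \<in> {a..b}"
      using nodes \<open>a \<le> x\<close> \<open>x + 3 * h \<le> b\<close> by auto
    have E1: "\<bar>w1 - y x1\<bar> \<le> A * \<Delta> + 81 * C1 * h ^ 4"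
      using stage[of x "x1 - x" w] nodes \<open>a \<le> x\<close> \<open>x + 3 * h \<le> b\<close> by (simp add: w1_def \<Delta>_def)
    have "\<bar>w2 - y x2\<bar> \<le> A * \<bar>w1 - y x1\<bar> + 81 * C1 * h ^ 4"
      using stage[of x1 "x2 - x1" w1] nodes \<open>a \<le> x\<close> \<open>x + 3 * h \<le> b\<close> by (simp add: w2_def)
    also have "\<dots> \<le> A * (A * \<Delta> + 81 * C1 * h ^ 4) + 81 * C1 * h ^ 4"
      using E1 \<open>1 \<le> A\<close> by simp
    finally have E2: "\<bar>w2 - y x2\<bar> \<le> A * (A * \<Delta> + 81 * C1 * h ^ 4) + 81 * C1 * h ^ 4" .
    have "\<bar>ydiff 0 x + 3 * h / 2 * (ydiff 1 x1 + ydiff 1 x2) - ydiff 0 (x + 3 * h)\<bar>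
        \<le> M5 * (3 * h) ^ 5 / 20"
      unfolding x1_def x2_def c_def
      by (rule gauss_legendre_2_error)
        (use \<open>0 \<le> h\<close> \<open>a \<le> x\<close> \<open>x + 3 * h \<le> b\<close> M5 in
          \<open>auto intro!: DERIV_subset[OF ydiff_has_derivative, of _ _ "{x..x + 3 * h}"]\<close>)
    from this[unfolded ydiff_0 ydiff_1 D00] have quad:
      "\<bar>y x + 3 * h / 2 * (f x1 (y x1) + f x2 (y x2)) - y (x + 3 * h)\<bar> \<le> M5 * (3 * h) ^ 5 / 20" .
    have "rk3gl2_block f h x w - y (x + 3 * h)
        = (w - y x) + 3 * h / 2 * ((f x1 w1 - f x1 (y x1)) + (f x2 w2 - f x2 (y x2)))
          + (y x + 3 * h / 2 * (f x1 (y x1) + f x2 (y x2)) - y (x + 3 * h))"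
      unfolding rk3gl2_block_def Let_def x1_def x2_def w1_def w2_def c_def by (simp add: algebra_simps)
    also have "\<bar>\<dots>\<bar> \<le> \<Delta> + 3 * h / 2 * (Dmax * \<bar>w1 - y x1\<bar> + Dmax * \<bar>w2 - y x2\<bar>) + M5 * (3 * h) ^ 5 / 20"
      using quad \<open>0 \<le> h\<close> f_lipschitz[OF \<open>x1 \<in> {a..b}\<close>] f_lipschitz[OF \<open>x2 \<in> {a..b}\<close>]
      by (intro abs_add_le abs_mult_le) (auto simp: \<Delta>_def)
    also have "\<dots> \<le> \<Delta> + 3 * h / 2 * (Dmax * (A * \<Delta> + 81 * C1 * h ^ 4)
        + Dmax * (A * (A * \<Delta> + 81 * C1 * h ^ 4) + 81 * C1 * h ^ 4)) + M5 * (3 * h) ^ 5 / 20"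
      using E1 E2 \<open>0 \<le> h\<close> Dmax(1) by (intro add_mono mult_left_mono order_refl) auto
    also have "\<dots> = (1 + K * h) * \<Delta> + C * h ^ 5"
      by (simp add: K_def C_def eval_nat_numeral field_simps)
    finally show "\<bar>rk3gl2_block f h x w - y (x + 3 * h)\<bar> \<le> (1 + K * h) * \<bar>w - y x\<bar> + C * h ^ 5"
      by (simp only: \<Delta>_def)
  qed
qed

end

theorem mainTheorem2:
  fixes f :: "real \<Rightarrow> real \<Rightarrow> real" and y :: "real \<Rightarrow> real" and a b :: real
    and D :: "nat \<Rightarrow> nat \<Rightarrow> real \<Rightarrow> real \<Rightarrow> real"
  assumes ab: "a < b"
    and D00: "\<And>x u. D 0 0 x u = f x u"
    and Dx: "\<And>i j x u. i + j < 4 \<Longrightarrow> x \<in> {a..b} \<Longrightarrow>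
               ((\<lambda>t. D i j t u) has_real_derivative D (Suc i) j x u) (at x within {a..b})"
    and Du: "\<And>i j x u. i + j < 4 \<Longrightarrow> x \<in> {a..b} \<Longrightarrow>
               ((\<lambda>s. D i j x s) has_real_derivative D i (Suc j) x u) (at u)"
    and Dcont: "\<And>i j. i + j \<le> 4 \<Longrightarrow>
               continuous_on ({a..b} \<times> UNIV) (\<lambda>p. D i j (fst p) (snd p))"
    and Dbdd: "\<And>i j. i + j \<le> 4 \<Longrightarrow> \<exists>M. \<forall>x\<in>{a..b}. \<forall>u. \<bar>D i j x u\<bar> \<le> M"
    and sol: "\<And>x. x \<in> {a..b} \<Longrightarrow> (y has_real_derivative f x (y x)) (at x within {a..b})"
  shows "\<exists>C. \<forall>N::nat. N \<ge> 1 \<longrightarrow>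
           \<bar>rk3gl2 f a ((b - a) / (3 * real N)) (y a) N - y b\<bar>
             \<le> C * ((b - a) / (3 * real N)) ^ 4"
proof -
  interpret ivp_smooth f y a b D
    by unfold_locales (fact assms)+
  obtain K C where "0 \<le> K" "0 \<le> C" and block: "\<And>x h w. a \<le> x \<Longrightarrow> 0 \<le> h \<Longrightarrow> x + 3 * h \<le> b \<Longrightarrow>
      \<bar>rk3gl2_block f h x w - y (x + 3 * h)\<bar> \<le> (1 + K * h) * \<bar>w - y x\<bar> + C * h ^ 5"
    using rk3gl2_block_error by blast
  show ?thesis
  proof (intro exI[of _ "(b - a) / 3 * C * exp (K * (b - a) / 3)"] allI impI)
    fix N :: nat
    assume "N \<ge> 1"
    define h where "h = (b - a) / (3 * real N)"
    have "0 \<le> h" and Nh: "real N * h = (b - a) / 3"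
      using ab \<open>N \<ge> 1\<close> by (auto simp: h_def)
    define err where "err k = rk3gl2 f a h (y a) k - y (a + 3 * real k * h)" for k
    have "\<bar>err (Suc k)\<bar> \<le> (1 + K * h) * \<bar>err k\<bar> + C * h ^ 5" if "k < N" for k
    proof -
      have "3 * real (Suc k) * h \<le> 3 * real N * h"
        using that \<open>0 \<le> h\<close> by (intro mult_right_mono) auto
      then show ?thesis
        using block[of "a + 3 * real k * h" h] \<open>0 \<le> h\<close> Nh
        by (simp add: err_def algebra_simps)
    qed
    then have "\<bar>err N\<bar> \<le> real N * (C * h ^ 5) * exp (real N * (K * h))"
      using \<open>0 \<le> K\<close> \<open>0 \<le> C\<close> \<open>0 \<le> h\<close> by (intro linear_recurrence_bound) (auto simp: err_def)
    also have "\<dots> = (real N * h) * C * exp (K * (real N * h)) * h ^ 4"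
      by (simp add: algebra_simps eval_nat_numeral)
    also have "\<dots> = (b - a) / 3 * C * exp (K * (b - a) / 3) * h ^ 4"
      unfolding Nh by simp
    finally show "\<bar>rk3gl2 f a h (y a) N - y b\<bar> \<le> (b - a) / 3 * C * exp (K * (b - a) / 3) * h ^ 4"
      using Nh by (simp add: err_def algebra_simps)
  qed
qed

end
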